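(* In an $a^2bc$-tiling, every vertex of degree $3$ is one of $\alpha^3$, $\alpha\beta^2$, $\alpha\gamma^2$, $\beta\gamma\delta$.
   Context: An $a^2bc$-quadrilateral is a simple spherical quadrilateral with edges $a,a,b,c$ in cyclic order, $a,b,c$ pairwise distinct; $\alpha$ = angle between the two $a$-edges; $\beta$ = angle between an $a$-edge and the $b$-edge; $\delta$ = angle between the $b$-edge and the $c$-edge; $\gamma$ = angle between the $c$-edge and an $a$-edge. An $a^2bc$-tiling is an edge-to-edge tiling of the sphere by congruent copies of such a quadrilateral with all vertices of degree $\ge3$. A vertex $\alpha^k\beta^l\gamma^m\delta^n$ has exactly $k$ copies of $\alpha$, etc. *)

theory Defs
  imports "HOL-Analysis.Analysis"
begin

type_synonym pt = "real^3"

definition sdist :: "pt \<Rightarrow> pt \<Rightarrow> real" where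
  "sdist p q = arccos (p \<bullet> q)"

text \<open>Minor great-circle arc from p to q (p, q unit, distinct, not antipodal).\<close>
definition sarc :: "pt \<Rightarrow> pt \<Rightarrow> pt set" where
  "sarc p q = (\<lambda>t. sgn ((1 - t) *\<^sub>R p + t *\<^sub>R q)) ` {0..1}"

definition nxt :: "nat \<Rightarrow> nat" where
  "nxt k = Suc k mod 4"

definition qedge :: "(nat \<Rightarrow> pt) \<Rightarrow> nat \<Rightarrow> pt set" where
  "qedge V k = sarc (V k) (V (nxt k))"

definition qboundary :: "(nat \<Rightarrow> pt) \<Rightarrow> pt set" where
  "qboundary V = (\<Union>k<4. qedge V k)"

text \<open>A simple spherical quadrilateral with corners V 0, V 1, V 2, V 3 (in cyclic order)
  whose open region is C, a connected component of the sphere minus the boundary curve.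
  The tile is closure C.\<close>
definition simple_squad :: "(nat \<Rightarrow> pt) \<Rightarrow> pt set \<Rightarrow> bool" where
  "simple_squad V C \<longleftrightarrow>
     (\<forall>k<4. V k \<in> sphere 0 1) \<and>
     (\<forall>k<4. \<forall>l<4. k \<noteq> l \<longrightarrow> V k \<noteq> V l) \<and>
     (\<forall>k<4. V (nxt k) \<noteq> - V k) \<and>
     (\<forall>k<4. qedge V k \<inter> qedge V (nxt k) = {V (nxt k)}) \<and>
     qedge V 0 \<inter> qedge V 2 = {} \<and> qedge V 1 \<inter> qedge V 3 = {} \<and>
     C \<in> components (sphere 0 1 - qboundary V)"

text \<open>Corner V 0 = alpha (between
  the two a-edges), V 1 = beta (a-edge and b-edge), V 2 = delta (b-edge and c-edge),
  V 3 = gamma (c-edge and a-edge).\<close>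
definition a2bc_quad :: "(nat \<Rightarrow> pt) \<Rightarrow> pt set \<Rightarrow> bool" where
  "a2bc_quad V C \<longleftrightarrow> simple_squad V C \<and>
     (\<exists>a b c. sdist (V 3) (V 0) = a \<and> sdist (V 0) (V 1) = a \<and>
              sdist (V 1) (V 2) = b \<and> sdist (V 2) (V 3) = c \<and>
              a \<noteq> b \<and> b \<noteq> c \<and> a \<noteq> c)"

text \<open>Tiles are the congruent copies g i ` closure C, i \<in> I, where each g i is an orthogonal
  transformation of R^3 (isometry of the sphere, reflections allowed).\<close>
definition tile :: "pt set \<Rightarrow> ('i \<Rightarrow> pt \<Rightarrow> pt) \<Rightarrow> 'i \<Rightarrow> pt set" where
  "tile C g i = g i ` closure C"

definition tvert :: "(nat \<Rightarrow> pt) \<Rightarrow> ('i \<Rightarrow> pt \<Rightarrow> pt) \<Rightarrow> 'i \<Rightarrow> nat \<Rightarrow> pt" where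
  "tvert V g i k = g i (V k)"

definition tedge :: "(nat \<Rightarrow> pt) \<Rightarrow> ('i \<Rightarrow> pt \<Rightarrow> pt) \<Rightarrow> 'i \<Rightarrow> nat \<Rightarrow> pt set" where
  "tedge V g i k = sarc (tvert V g i k) (tvert V g i (nxt k))"

definition tiling_vertices :: "(nat \<Rightarrow> pt) \<Rightarrow> ('i \<Rightarrow> pt \<Rightarrow> pt) \<Rightarrow> 'i set \<Rightarrow> pt set" where
  "tiling_vertices V g I = {tvert V g i k | i k. i \<in> I \<and> k < 4}"

text \<open>Edges of the tiling incident to v (as point sets; an edge shared by two tiles counts once).\<close>
definition edges_at :: "(nat \<Rightarrow> pt) \<Rightarrow> ('i \<Rightarrow> pt \<Rightarrow> pt) \<Rightarrow> 'i set \<Rightarrow> pt \<Rightarrow> pt set set" where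
  "edges_at V g I v = {tedge V g i k | i k. i \<in> I \<and> k < 4 \<and>
                          (v = tvert V g i k \<or> v = tvert V g i (nxt k))}"

definition degree :: "(nat \<Rightarrow> pt) \<Rightarrow> ('i \<Rightarrow> pt \<Rightarrow> pt) \<Rightarrow> 'i set \<Rightarrow> pt \<Rightarrow> nat" where
  "degree V g I v = card (edges_at V g I v)"

text \<open>Number of corners of type k (0 = alpha, 1 = beta, 2 = delta, 3 = gamma) at v.\<close>
definition ncorner :: "(nat \<Rightarrow> pt) \<Rightarrow> ('i \<Rightarrow> pt \<Rightarrow> pt) \<Rightarrow> 'i set \<Rightarrow> nat \<Rightarrow> pt \<Rightarrow> nat" where
  "ncorner V g I k v = card {i \<in> I. tvert V g i k = v}"

definition a2bc_tiling :: "(nat \<Rightarrow> pt) \<Rightarrow> pt set \<Rightarrow> ('i \<Rightarrow> pt \<Rightarrow> pt) \<Rightarrow> 'i set \<Rightarrow> bool" where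
  "a2bc_tiling V C g I \<longleftrightarrow>
     a2bc_quad V C \<and> finite I \<and>
     (\<forall>i\<in>I. orthogonal_transformation (g i)) \<and>
     (\<Union>i\<in>I. tile C g i) = sphere 0 1 \<and>
     (\<forall>i\<in>I. \<forall>j\<in>I. i \<noteq> j \<longrightarrow> g i ` C \<inter> g j ` C = {}) \<and>
     (\<forall>i\<in>I. \<forall>j\<in>I. i \<noteq> j \<longrightarrow>
        tile C g i \<inter> tile C g j = {} \<or>
        (\<exists>k<4. \<exists>l<4. tile C g i \<inter> tile C g j = {tvert V g i k} \<and> tvert V g i k = tvert V g j l) \<or>
        (\<exists>k<4. \<exists>l<4. tile C g i \<inter> tile C g j = tedge V g i k \<and> tedge V g i k = tedge V g j l)) \<and>
     (\<forall>v\<in>tiling_vertices V g I. degree V g I v \<ge> 3)"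

end

theory Submission
  imports Defs
begin

text \<open>Every edge of the tiling is shared by exactly two tiles: at least two because, by the
  Jordan curve theorem on the sphere, each boundary point of a tile is also a limit of points
  outside it; at most two because near the midpoint of an edge the sphere is split by the edge
  into two half-discs, and each tile containing the edge fills one of them while tile interiors
  are disjoint.  Counting, at a vertex v, the pairs (corner at v, edge at v of length x) for each
  of the three edge lengths x = a, b, c gives three linear relations between the numbers of
  corners \<alpha>, \<beta>, \<gamma>, \<delta> at v and the numbers of a-, b-, c-edges at v.  With
  degree 3 and the fact that an \<alpha> corner already brings two distinct a-edges, these relations
  leave only \<alpha>^3, \<alpha>\<beta>^2, \<alpha>\<gamma>^2 and \<beta>\<gamma>\<delta>.\<close>

section \<open>Jordan curves on the 2-sphere\<close>

lemma sphere_delete_homeomorphic_plane: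
  fixes b :: "real^3"
  assumes "b \<in> sphere 0 1"
  shows "(sphere 0 1 - {b}) homeomorphic (UNIV :: complex set)"
proof -
  have b0: "b \<noteq> 0" using assms by auto
  have "(sphere 0 1 - {b}) homeomorphic {x::real^3. b \<bullet> x = 0}"
    using homeomorphic_punctured_sphere_hyperplane[of 1 b 0 b 0] assms b0 by auto
  also have "{x::real^3. b \<bullet> x = 0} homeomorphic (UNIV :: complex set)"
    by (rule homeomorphic_subspaces) (auto simp: subspace_hyperplane dim_hyperplane b0)
  finally show ?thesis .
qed

lemma openin_components_diff_closed:
  assumes "locally connected S" "closed G" "C \<in> components (S - G)"
  shows "openin (top_of_set S) C"
proof -
  have "openin (top_of_set S) (S - S \<inter> G)"
    by (intro openin_diff openin_subtopology_self closedin_closed_Int assms(2))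
  then have open_diff: "openin (top_of_set S) (S - G)"
    by (simp add: Diff_Int)
  then have "locally connected (S - G)"
    using assms(1) locally_open_subset by blast
  then have "openin (top_of_set (S - G)) C"
    using openin_components_locally_connected assms(3) by blast
  then show ?thesis
    using open_diff openin_trans by blast
qed

lemma connected_openin_sphere_delete:
  fixes C :: "(real^3) set"
  assumes C: "openin (top_of_set (sphere 0 1)) C" "connected C" "C \<noteq> sphere 0 1"
  shows "connected (C - {b})"
proof (cases "b \<in> C")
  case False
  then show ?thesis using C(2) by simp
next
  case True
  have C_sub: "C \<subseteq> sphere 0 1" using C(1) openin_imp_subset by blast
  then obtain b0 where b0: "b0 \<in> sphere 0 1" "b0 \<notin> C" using C(3) by blast
  then obtain f h where hom: "homeomorphism (sphere 0 1 - {b0}) UNIV f (h :: complex \<Rightarrow> _)"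
    using sphere_delete_homeomorphic_plane homeomorphic_def by blast
  have C_sub': "C \<subseteq> sphere 0 1 - {b0}" using C_sub b0 by blast
  have hom_C: "homeomorphism C (f ` C) f h"
    using homeomorphism_of_subsets[OF hom C_sub'] by blast
  have "open (f ` C)"
    using homeomorphism_imp_open_map[OF hom openin_subset_trans[OF C(1) C_sub']] by simp
  moreover have "connected (f ` C)"
    using C(2) hom_C homeomorphic_connectedness homeomorphic_def by blast
  ultimately have "connected (f ` C - {f b})"
    by (intro connected_open_delete) auto
  moreover have "inj_on f C"
    using hom_C by (metis homeomorphism_apply1 inj_on_inverseI)
  then have "f ` (C - {b}) = f ` C - {f b}"
    using True inj_on_image_set_diff[of f C C "{b}"] by auto
  ultimately have "homeomorphism (C - {b}) (f ` C - {f b}) f h"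
    using homeomorphism_of_subsets[OF hom_C Diff_subset subset_refl refl, of "{b}"] by simp
  then show ?thesis
    using \<open>connected (f ` C - {f b})\<close> homeomorphic_connectedness homeomorphic_def by blast
qed

lemma sphere_delete_homeomorphism_complement:
  fixes G :: "(real^3) set"
  assumes G: "G \<subseteq> sphere 0 1" and b: "b \<in> sphere 0 1" "b \<notin> G"
  obtains f :: "real^3 \<Rightarrow> complex" and h
  where "homeomorphism (sphere 0 1 - {b}) UNIV f h"
    and "homeomorphism (sphere 0 1 - {b} - G) (- f ` G) f h"
    and "G homeomorphic f ` G"
proof -
  obtain f :: "real^3 \<Rightarrow> complex" and h where hom: "homeomorphism (sphere 0 1 - {b}) UNIV f h"
    using sphere_delete_homeomorphic_plane[OF b(1)] homeomorphic_def by blast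
  have G_sub: "G \<subseteq> sphere 0 1 - {b}" using G b by blast
  have hf: "\<And>x. x \<in> sphere 0 1 - {b} \<Longrightarrow> h (f x) = x" and fh: "\<And>y. f (h y) = y"
    using hom by (simp_all add: homeomorphism_def)
  have h_range: "h y \<in> sphere 0 1 - {b}" for y
    using homeomorphism_image2[OF hom] by blast
  have "f ` (sphere 0 1 - {b} - G) = - f ` G"
  proof (intro set_eqI iffI)
    fix y assume "y \<in> f ` (sphere 0 1 - {b} - G)"
    then obtain x where "x \<in> sphere 0 1 - {b}" "x \<notin> G" "y = f x" by blast
    then show "y \<in> - f ` G" using hf G_sub by (metis ComplI imageE subsetD)
  next
    fix y assume "y \<in> - f ` G"
    then have "h y \<notin> G" using fh by (metis ComplD image_eqI)
    then show "y \<in> f ` (sphere 0 1 - {b} - G)" using fh h_range by (metis DiffI image_eqI)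
  qed
  then have "homeomorphism (sphere 0 1 - {b} - G) (- f ` G) f h"
    using homeomorphism_of_subsets[OF hom Diff_subset subset_UNIV] by blast
  moreover have "G homeomorphic f ` G"
    using homeomorphism_of_subsets[OF hom G_sub subset_UNIV refl] homeomorphic_def by blast
  ultimately show ?thesis using that hom by blast
qed

lemma Jordan_sphere_separation:
  fixes G C :: "(real^3) set"
  assumes G: "G \<subseteq> sphere 0 1" "G homeomorphic sphere (0::complex) 1"
    and C: "C \<in> components (sphere 0 1 - G)"
  shows "\<exists>D \<in> components (sphere 0 1 - G). D \<noteq> C"
proof (rule ccontr)
  assume "\<not> ?thesis"
  then have "components (sphere 0 1 - G) = {C}" using C by blast
  then have C_eq: "C = sphere 0 1 - G"
    using Union_components[of "sphere 0 1 - G"] by simp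
  have "closed G"
    using G(2) homeomorphic_compactness compact_sphere compact_imp_closed by blast
  moreover have "G \<noteq> {}"
    using G(2) by auto
  ultimately have C_conn: "connected (C - {b})" for b
    using C G(1) C_eq
    by (intro connected_openin_sphere_delete in_components_connected
        openin_components_diff_closed[OF locally_connected_sphere]) auto
  obtain b where b: "b \<in> C" using C in_components_nonempty by blast
  then obtain f :: "real^3 \<Rightarrow> complex" and h
    where hom: "homeomorphism (sphere 0 1 - {b} - G) (- f ` G) f h" and "G homeomorphic f ` G"
    using sphere_delete_homeomorphism_complement[OF G(1)] C_eq by blast
  then have "f ` G homeomorphic sphere (0::complex) 1"
    using G(2) homeomorphic_sym homeomorphic_trans by blast
  then have "\<not> connected (- f ` G)"
    by (rule Jordan_Brouwer_separation) simp
  moreover have "sphere 0 1 - {b} - G = C - {b}" using C_eq by blast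
  then have "connected (- f ` G)"
    using hom C_conn homeomorphic_connectedness homeomorphic_def by metis
  ultimately show False by blast
qed

lemma Jordan_sphere_frontier:
  fixes G C :: "(real^3) set"
  assumes G: "G \<subseteq> sphere 0 1" "G homeomorphic sphere (0::complex) 1"
    and C: "C \<in> components (sphere 0 1 - G)" and p: "p \<in> G"
  shows "p \<in> closure C"
proof -
  obtain D where D: "D \<in> components (sphere 0 1 - G)" "D \<noteq> C"
    using Jordan_sphere_separation[OF G C] by blast
  obtain b where b: "b \<in> D" using D in_components_nonempty by blast
  have "b \<in> sphere 0 1" "b \<notin> G" using b D in_components_subset by blast+
  then obtain f :: "real^3 \<Rightarrow> complex" and h
    where hom: "homeomorphism (sphere 0 1 - {b}) UNIV f h"
      and hom_G: "homeomorphism (sphere 0 1 - {b} - G) (- f ` G) f h"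
      and "G homeomorphic f ` G"
    using sphere_delete_homeomorphism_complement[OF G(1)] by blast
  then have fG: "f ` G homeomorphic sphere (0::complex) 1"
    using G(2) homeomorphic_sym homeomorphic_trans by blast
  have "C \<inter> D = {}"
    using components_nonoverlap[OF C D(1)] D(2) by blast
  then have "C \<subseteq> sphere 0 1 - {b} - G"
    using in_components_subset[OF C] b by blast
  then have C': "C \<in> components (sphere 0 1 - {b} - G)"
    using C components_intermediate_subset by blast
  then obtain x where x: "x \<in> sphere 0 1 - {b} - G"
    and C_eq: "C = connected_component_set (sphere 0 1 - {b} - G) x"
    by (auto simp: components_iff)
  have "f x \<in> - f ` G"
    using x homeomorphism_image1[OF hom_G] by blast
  then have "f ` C \<in> components (- f ` G)"
    unfolding C_eq connected_component_set_homeomorphism[OF hom_G x, symmetric] by (rule componentsI)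
  then have "frontier (f ` C) = f ` G"
    using Jordan_Brouwer_frontier[OF fG] by simp
  then have "f p \<in> closure (f ` C)"
    using p by (auto simp: frontier_def)
  moreover have "continuous_on UNIV h"
    using hom by (simp add: homeomorphism_def)
  then have "h ` closure (f ` C) \<subseteq> closure (h ` f ` C)"
    by (intro image_closure_subset) (auto intro: continuous_on_subset closure_subset[THEN subsetD])
  ultimately have "h (f p) \<in> closure (h ` f ` C)"
    by blast
  moreover have "h (f x) = x" if "x \<in> sphere 0 1 - {b}" for x
    using hom that by (simp add: homeomorphism_def)
  then have "h ` f ` C = C" and "h (f p) = p"
    using in_components_subset[OF C'] G(1) p \<open>b \<notin> G\<close> by (force simp: image_image)+
  ultimately show ?thesis by simp
qed

lemma Jordan_sphere_closure_both_sides: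
  fixes G C :: "(real^3) set"
  assumes G: "G \<subseteq> sphere 0 1" "G homeomorphic sphere (0::complex) 1"
    and C: "C \<in> components (sphere 0 1 - G)" and p: "p \<in> G"
  shows "p \<in> closure C" "p \<in> closure (sphere 0 1 - closure C)"
proof -
  show "p \<in> closure C" using Jordan_sphere_frontier[OF assms] .
  obtain D where D: "D \<in> components (sphere 0 1 - G)" "D \<noteq> C"
    using Jordan_sphere_separation[OF G C] by blast
  have "closed G"
    using G(2) homeomorphic_compactness compact_sphere compact_imp_closed by blast
  then obtain U where U: "open U" "D = sphere 0 1 \<inter> U"
    using openin_components_diff_closed[OF locally_connected_sphere _ D(1)] openin_open by metis
  have "U \<inter> C = {}"
    using U D C components_nonoverlap in_components_subset by blast
  then have "D \<subseteq> sphere 0 1 - closure C"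
    using U open_Int_closure_eq_empty by blast
  moreover have "p \<in> closure D" using Jordan_sphere_frontier[OF G D(1) p] .
  ultimately show "p \<in> closure (sphere 0 1 - closure C)"
    using closure_mono by blast
qed

section \<open>Minor great-circle arcs\<close>

definition minor_arc_ends :: "real^3 \<Rightarrow> real^3 \<Rightarrow> bool" where
  "minor_arc_ends p q \<longleftrightarrow> norm p = 1 \<and> norm q = 1 \<and> p \<noteq> q \<and> p \<noteq> - q"

lemma minor_arc_ends_independent:
  assumes ends: "minor_arc_ends p q" and comb: "a *\<^sub>R p + b *\<^sub>R q = 0"
  shows "a = 0 \<and> b = 0"
proof (cases "a = 0")
  case True
  then show ?thesis using comb ends by (auto simp: minor_arc_ends_def)
next
  case False
  then have "p = (- b / a) *\<^sub>R q" using comb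
    by (metis add.commute add_eq_0_iff2 divide_inverse_commute eq_vector_fraction_iff scaleR_minus_left)
  then have "\<bar>- b / a\<bar> = 1" using ends by (auto simp: minor_arc_ends_def)
  then have "- b / a = 1 \<or> - b / a = -1" by linarith
  then show ?thesis using \<open>p = (- b / a) *\<^sub>R q\<close> ends by (auto simp: minor_arc_ends_def)
qed

lemma minor_arc_ends_inner_bounds:
  assumes "minor_arc_ends p q"
  shows "p \<bullet> q < 1" "-1 < p \<bullet> q"
proof -
  have unit: "p \<bullet> p = 1" "q \<bullet> q = 1" using assms by (simp_all add: minor_arc_ends_def norm_eq_1)
  have "0 < (norm (p - q))\<^sup>2" "0 < (norm (p + q))\<^sup>2"
    using assms by (auto simp: minor_arc_ends_def add_eq_0_iff2)
  moreover have "(norm (p - q))\<^sup>2 = 2 - 2 * (p \<bullet> q)" "(norm (p + q))\<^sup>2 = 2 + 2 * (p \<bullet> q)"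
    by (simp_all add: power2_norm_eq_inner algebra_simps unit inner_commute[of q p])
  ultimately show "p \<bullet> q < 1" "-1 < p \<bullet> q" by linarith+
qed

lemma minor_arc_ends_linepath_nonzero:
  assumes "minor_arc_ends p q"
  shows "linepath p q t \<noteq> 0"
  using minor_arc_ends_independent[OF assms, of "1 - t" t] by (auto simp: linepath_def)

lemma minor_arc_ends_linepath_parallel:
  assumes "minor_arc_ends p q" "linepath p q s = c *\<^sub>R linepath p q t"
  shows "s = t"
proof -
  have "(1 - s - c * (1 - t)) *\<^sub>R p + (s - c * t) *\<^sub>R q = 0"
    using assms(2) by (simp add: linepath_def algebra_simps)
  then have "1 - s - c * (1 - t) = 0" "s - c * t = 0"
    using minor_arc_ends_independent[OF assms(1)] by blast+
  then show ?thesis by (simp add: algebra_simps)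
qed

lemma sarc_eq_image_linepath: "sarc p q = (\<lambda>t. sgn (linepath p q t)) ` {0..1}"
  by (simp add: sarc_def linepath_def)

lemma arc_sgn_linepath:
  assumes ends: "minor_arc_ends p q"
  defines "\<gamma> \<equiv> \<lambda>t. sgn (linepath p q t)"
  shows "arc \<gamma>" "path_image \<gamma> = sarc p q" "pathstart \<gamma> = p" "pathfinish \<gamma> = q"
proof -
  have "continuous_on {0..1} \<gamma>"
    unfolding \<gamma>_def using minor_arc_ends_linepath_nonzero[OF ends]
    by (intro continuous_on_sgn continuous_on_linepath) auto
  moreover have "inj_on \<gamma> {0..1}"
  proof (rule inj_onI)
    fix s t assume st: "\<gamma> s = \<gamma> t"
    define ns nt where "ns = norm (linepath p q s)" and "nt = norm (linepath p q t)"
    have "nt \<noteq> 0" using minor_arc_ends_linepath_nonzero[OF ends] by (simp add: nt_def)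
    have "linepath p q s = ns *\<^sub>R \<gamma> s"
      using minor_arc_ends_linepath_nonzero[OF ends] by (simp add: \<gamma>_def ns_def sgn_div_norm)
    also have "\<dots> = (ns / nt) *\<^sub>R linepath p q t"
      using st \<open>nt \<noteq> 0\<close> by (simp add: \<gamma>_def sgn_div_norm nt_def divide_inverse_commute)
    finally have "linepath p q s = (ns / nt) *\<^sub>R linepath p q t" .
    then show "s = t" by (rule minor_arc_ends_linepath_parallel[OF ends])
  qed
  ultimately show "arc \<gamma>" by (simp add: arc_def path_def)
  show "path_image \<gamma> = sarc p q"
    by (simp add: path_image_def sarc_eq_image_linepath \<gamma>_def)
  show "pathstart \<gamma> = p" "pathfinish \<gamma> = q"
    using ends by (simp_all add: \<gamma>_def pathstart_def pathfinish_def minor_arc_ends_def sgn_div_norm linepath_def)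
qed

lemma sarc_ends_mem:
  assumes "minor_arc_ends p q"
  shows "p \<in> sarc p q" "q \<in> sarc p q"
  using arc_sgn_linepath[OF assms] by (metis pathstart_in_path_image pathfinish_in_path_image)+

lemma sarc_subset_sphere:
  assumes "minor_arc_ends p q"
  shows "sarc p q \<subseteq> sphere 0 1"
  using minor_arc_ends_linepath_nonzero[OF assms] by (auto simp: sarc_eq_image_linepath norm_sgn)

lemma sarc_cone:
  assumes "x \<in> sarc p q"
  obtains a b where "0 \<le> a" "0 \<le> b" "x = a *\<^sub>R p + b *\<^sub>R q"
proof -
  obtain t where t: "t \<in> {0..1}" "x = sgn ((1 - t) *\<^sub>R p + t *\<^sub>R q)"
    using assms by (auto simp: sarc_def)
  define n where "n = norm ((1 - t) *\<^sub>R p + t *\<^sub>R q)"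
  have "x = ((1 - t) / n) *\<^sub>R p + (t / n) *\<^sub>R q"
    using t by (simp add: sgn_div_norm n_def scaleR_add_right divide_inverse_commute)
  then show ?thesis using t that[of "(1 - t) / n" "t / n"] by (simp add: n_def)
qed

lemma sarc_ends_unique:
  assumes ends: "minor_arc_ends p q" "minor_arc_ends p' q'" and eq: "sarc p q = sarc p' q'"
  shows "(p' = p \<and> q' = q) \<or> (p' = q \<and> q' = p)"
proof -
  obtain a1 b1 a2 b2 where A: "a1 \<ge> 0" "b1 \<ge> 0" "p = a1 *\<^sub>R p' + b1 *\<^sub>R q'"
    "a2 \<ge> 0" "b2 \<ge> 0" "q = a2 *\<^sub>R p' + b2 *\<^sub>R q'"
    using sarc_ends_mem[OF ends(1)] eq sarc_cone by metis
  obtain c1 d1 c2 d2 where B: "c1 \<ge> 0" "d1 \<ge> 0" "p' = c1 *\<^sub>R p + d1 *\<^sub>R q"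
    "c2 \<ge> 0" "d2 \<ge> 0" "q' = c2 *\<^sub>R p + d2 *\<^sub>R q"
    using sarc_ends_mem[OF ends(2)] eq sarc_cone by metis
  have "p = a1 *\<^sub>R (c1 *\<^sub>R p + d1 *\<^sub>R q) + b1 *\<^sub>R (c2 *\<^sub>R p + d2 *\<^sub>R q)"
    using A(3) B(3,6) by simp
  then have "(a1 * c1 + b1 * c2 - 1) *\<^sub>R p + (a1 * d1 + b1 * d2) *\<^sub>R q = 0"
    by (simp add: algebra_simps)
  then have E1: "a1 * c1 + b1 * c2 - 1 = 0 \<and> a1 * d1 + b1 * d2 = 0"
    by (rule minor_arc_ends_independent[OF ends(1)])
  have "q = a2 *\<^sub>R (c1 *\<^sub>R p + d1 *\<^sub>R q) + b2 *\<^sub>R (c2 *\<^sub>R p + d2 *\<^sub>R q)"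
    using A(6) B(3,6) by simp
  then have "(a2 * c1 + b2 * c2) *\<^sub>R p + (a2 * d1 + b2 * d2 - 1) *\<^sub>R q = 0"
    by (simp add: algebra_simps)
  then have E2: "a2 * c1 + b2 * c2 = 0 \<and> a2 * d1 + b2 * d2 - 1 = 0"
    by (rule minor_arc_ends_independent[OF ends(1)])
  from E1 E2 have E: "a1 * c1 + b1 * c2 = 1" "a1 * d1 + b1 * d2 = 0"
                     "a2 * c1 + b2 * c2 = 0" "a2 * d1 + b2 * d2 = 1"
    by linarith+
  have "0 \<le> a1 * d1" "0 \<le> b1 * d2" "0 \<le> a2 * c1" "0 \<le> b2 * c2"
    using A(1,2,4,5) B(1,2,4,5) by simp_all
  \<comment> \<open>the two vanishing sums have nonnegative terms\<close>
  then have Z: "a1 * d1 = 0" "b1 * d2 = 0" "a2 * c1 = 0" "b2 * c2 = 0"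
    using E(2,3) by linarith+
  have unit: "norm p = 1" "norm q = 1" "norm p' = 1" "norm q' = 1"
    using ends by (auto simp: minor_arc_ends_def)
  show ?thesis
  proof (cases "a1 = 0")
    case True
    then have "b1 \<noteq> 0" "c2 \<noteq> 0" using E(1) by auto
    then have "b2 = 0" using Z(4) by simp
    have p: "p = b1 *\<^sub>R q'" using A(3) True by simp
    have q: "q = a2 *\<^sub>R p'" using A(6) \<open>b2 = 0\<close> by simp
    have "b1 = 1" using p unit(1,4) A(2) by simp
    moreover have "a2 = 1" using q unit(2,3) A(4) by simp
    ultimately show ?thesis using p q by simp
  next
    case False
    then have "d1 = 0" using Z(1) by simp
    then have "b2 \<noteq> 0" "d2 \<noteq> 0" using E(4) by auto
    then have "b1 = 0" "c2 = 0" using Z(2,4) by simp_all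
    then have "c1 \<noteq> 0" using E(1) by auto
    then have "a2 = 0" using Z(3) by simp
    have p: "p = a1 *\<^sub>R p'" using A(3) \<open>b1 = 0\<close> by simp
    have q: "q = b2 *\<^sub>R q'" using A(6) \<open>a2 = 0\<close> by simp
    have "a1 = 1" using p unit(1,3) A(1) by simp
    moreover have "b2 = 1" using q unit(2,4) A(5) by simp
    ultimately show ?thesis using p q by simp
  qed
qed

lemma sarc_midpoint:
  assumes ends: "minor_arc_ends p q"
  shows "sgn (p + q) \<in> sarc p q" "sgn (p + q) \<noteq> p" "sgn (p + q) \<noteq> q"
proof -
  have "sgn (p + q) = sgn ((1 - 1/2) *\<^sub>R p + (1/2) *\<^sub>R q)"
    by (simp add: sgn_scaleR flip: scaleR_add_right)
  then show "sgn (p + q) \<in> sarc p q"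
    unfolding sarc_def by (intro image_eqI[of _ _ "1/2"]) auto
  define n where "n = norm (p + q)"
  have sum_eq: "p + q = n *\<^sub>R sgn (p + q)"
    by (cases "p + q = 0") (simp_all add: n_def sgn_div_norm)
  show "sgn (p + q) \<noteq> p"
  proof
    assume "sgn (p + q) = p"
    then have "(1 - n) *\<^sub>R p + 1 *\<^sub>R q = 0" using sum_eq by (simp add: algebra_simps)
    then show False using minor_arc_ends_independent[OF ends, of "1 - n" 1] by simp
  qed
  show "sgn (p + q) \<noteq> q"
  proof
    assume "sgn (p + q) = q"
    then have "1 *\<^sub>R p + (1 - n) *\<^sub>R q = 0" using sum_eq by (simp add: algebra_simps)
    then show False using minor_arc_ends_independent[OF ends, of 1 "1 - n"] by simp
  qed
qed

lemma orthogonal_transformation_sarc: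
  assumes "orthogonal_transformation f"
  shows "sarc (f p) (f q) = f ` sarc p q"
proof -
  have "f (sgn x) = sgn (f x)" for x
    using assms by (simp add: sgn_div_norm orthogonal_transformation_scaleR orthogonal_transformation_norm)
  moreover have "f (linepath p q t) = linepath (f p) (f q) t" for t
    using assms by (simp add: linepath_def orthogonal_transformation_scaleR linear_add
        orthogonal_transformation_linear)
  ultimately have "f (sgn (linepath p q t)) = sgn (linepath (f p) (f q) t)" for t
    by simp
  then show ?thesis by (simp add: sarc_eq_image_linepath image_image)
qed

lemma orthogonal_transformation_sdist:
  assumes "orthogonal_transformation f"
  shows "sdist (f p) (f q) = sdist p q"
  using assms by (simp add: sdist_def orthogonal_transformation_def)

lemma orthogonal_transformation_minor_arc_ends:
  assumes "orthogonal_transformation f" "minor_arc_ends p q"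
  shows "minor_arc_ends (f p) (f q)"
proof -
  have "f (- q) = - f q"
    using assms(1) orthogonal_transformation_linear linear_neg by blast
  then show ?thesis using assms orthogonal_transformation_inj unfolding minor_arc_ends_def
    by (metis inj_eq orthogonal_transformation_norm)
qed

lemma convex_norm_cone:
  fixes a :: "'a::real_inner"
  assumes "0 \<le> d"
  shows "convex {y. d * norm y < a \<bullet> y}"
proof (rule convexI)
  fix u w :: 'a and s t :: real
  assume u: "u \<in> {y. d * norm y < a \<bullet> y}" and w: "w \<in> {y. d * norm y < a \<bullet> y}"
    and st: "0 \<le> s" "0 \<le> t" "s + t = 1"
  have "d * norm (s *\<^sub>R u + t *\<^sub>R w) \<le> d * (s * norm u + t * norm w)"
    using assms st norm_triangle_ineq[of "s *\<^sub>R u" "t *\<^sub>R w"]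
    by (intro mult_left_mono) auto
  also have "\<dots> = s * (d * norm u) + t * (d * norm w)"
    by (simp add: algebra_simps)
  also have "\<dots> < s * (a \<bullet> u) + t * (a \<bullet> w)"
  proof (cases "s = 0")
    case True
    then show ?thesis using w st by simp
  next
    case False
    then have "s * (d * norm u) < s * (a \<bullet> u)" using u st by simp
    moreover have "t * (d * norm w) \<le> t * (a \<bullet> w)" using w st by (intro mult_left_mono) auto
    ultimately show ?thesis by linarith
  qed
  also have "\<dots> = a \<bullet> (s *\<^sub>R u + t *\<^sub>R w)" by (simp add: inner_add_right)
  finally show "s *\<^sub>R u + t *\<^sub>R w \<in> {y. d * norm y < a \<bullet> y}" by simp
qed

lemma connected_sphere_Int_cone:
  fixes K :: "'a::real_normed_vector set"
  assumes "convex K" "0 \<notin> K" "\<And>c y. 0 < c \<Longrightarrow> y \<in> K \<Longrightarrow> c *\<^sub>R y \<in> K"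
  shows "connected (sphere 0 1 \<inter> K)"
proof -
  have "sphere 0 1 \<inter> K = sgn ` K"
  proof (intro set_eqI iffI)
    fix x assume "x \<in> sphere 0 1 \<inter> K"
    then show "x \<in> sgn ` K" by (intro image_eqI[of _ _ x]) (auto simp: sgn_div_norm)
  next
    fix x assume "x \<in> sgn ` K"
    then obtain y where "y \<in> K" "x = sgn y" by blast
    moreover have "y \<noteq> 0" using assms(2) \<open>y \<in> K\<close> by blast
    ultimately show "x \<in> sphere 0 1 \<inter> K"
      using assms(3)[of "inverse (norm y)" y] by (simp add: sgn_div_norm norm_sgn)
  qed
  moreover have "continuous_on K sgn"
    using assms(2) by (intro continuous_on_sgn continuous_intros) auto
  then have "connected (sgn ` K)"
    using connected_continuous_image convex_connected[OF assms(1)] by blast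
  ultimately show ?thesis by simp
qed

text \<open>A neighbourhood of the midpoint of a minor arc on the sphere: the part of the cap
  \<open>mid \<bullet> x > d\<close> inside the lune bounded by the great circles through the normal of the arc
  and either end.  The great circle of the arc meets it only within the arc and cuts it into
  two connected halves.\<close>
locale arc_lens =
  fixes v w :: "real^3" and d :: real
  assumes ends: "minor_arc_ends v w" and d: "0 \<le> d" "d < 1"
begin

definition mid :: "real^3" where "mid = sgn (v + w)"

definition normal :: "real^3" where "normal = cross3 v w"

definition lens_open :: "(real^3) set" where
  "lens_open = {x. 0 < (v - (v \<bullet> w) *\<^sub>R w) \<bullet> x \<and> 0 < (w - (v \<bullet> w) *\<^sub>R v) \<bullet> x \<and> d < mid \<bullet> x}"

definition lens :: "(real^3) set" where "lens = sphere 0 1 \<inter> lens_open"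

definition half_lens :: "real^3 \<Rightarrow> (real^3) set" where "half_lens n = {x \<in> lens. 0 < n \<bullet> x}"

lemma unit_ends: "v \<bullet> v = 1" "w \<bullet> w = 1"
  using ends by (simp_all add: minor_arc_ends_def norm_eq_1)

lemma one_minus_cos_sq_pos: "0 < 1 - (v \<bullet> w)\<^sup>2"
  using minor_arc_ends_inner_bounds[OF ends] by (simp add: abs_square_less_1)

lemma open_lens_open: "open lens_open"
  unfolding lens_open_def by (intro open_Collect_conj open_Collect_less continuous_intros)

lemma mid_in_sarc: "mid \<in> sarc v w"
  using sarc_midpoint[OF ends] by (simp add: mid_def)

lemma mid_in_lens_open: "mid \<in> lens_open"
proof -
  have "v + w \<noteq> 0" using ends by (auto simp: minor_arc_ends_def add_eq_0_iff2)
  then have n: "0 < norm (v + w)" and unit_mid: "mid \<bullet> mid = 1"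
    by (simp_all add: mid_def norm_sgn flip: norm_eq_1)
  have "(v - (v \<bullet> w) *\<^sub>R w) \<bullet> (v + w) = 1 - (v \<bullet> w)\<^sup>2"
       "(w - (v \<bullet> w) *\<^sub>R v) \<bullet> (v + w) = 1 - (v \<bullet> w)\<^sup>2"
    by (simp_all add: algebra_simps inner_add_right inner_diff_left unit_ends inner_commute[of w v]
        power2_eq_square)
  then show ?thesis
    using n one_minus_cos_sq_pos d unit_mid
    by (simp add: lens_open_def mid_def sgn_div_norm inner_scaleR_right)
qed

lemma normal_orthogonal_sarc: "x \<in> sarc v w \<Longrightarrow> normal \<bullet> x = 0"
  by (elim sarc_cone) (simp add: normal_def inner_add_right dot_cross_self inner_commute)

lemma lens_normal_plane_subset_sarc:
  assumes x: "x \<in> lens" "normal \<bullet> x = 0"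
  shows "x \<in> sarc v w"
proof -
  let ?c = "v \<bullet> w"
  define a b where "a = (v - ?c *\<^sub>R w) \<bullet> x" and "b = (w - ?c *\<^sub>R v) \<bullet> x"
  \<comment> \<open>the double cross product with the normal, expanded in two ways by the Lagrange identity\<close>
  have "cross3 normal (cross3 normal x) = - (normal \<bullet> normal) *\<^sub>R x"
    using x(2) by (simp add: Lagrange inner_commute)
  also have "normal \<bullet> normal = 1 - ?c\<^sup>2"
    using dot_cross[of v w v w] unit_ends by (simp add: normal_def power2_eq_square inner_commute)
  finally have lhs: "cross3 normal (cross3 normal x) = - (1 - ?c\<^sup>2) *\<^sub>R x" .
  have "cross3 normal x = (x \<bullet> v) *\<^sub>R w - (x \<bullet> w) *\<^sub>R v"
    using cross_skew[of normal x] Lagrange[of x v w] by (simp add: normal_def)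
  then have "cross3 normal (cross3 normal x) = (x \<bullet> v) *\<^sub>R cross3 normal w - (x \<bullet> w) *\<^sub>R cross3 normal v"
    by (simp add: Cross3.right_diff_distrib cross_mult_right)
  moreover have "cross3 normal w = ?c *\<^sub>R w - v" "cross3 normal v = w - ?c *\<^sub>R v"
    using cross_skew[of normal w] cross_skew[of normal v] Lagrange[of w v w] Lagrange[of v v w]
    by (simp_all add: normal_def unit_ends inner_commute[of w v])
  ultimately have "cross3 normal (cross3 normal x) = - (a *\<^sub>R v + b *\<^sub>R w)"
    by (simp add: a_def b_def algebra_simps inner_diff_left inner_commute[of _ x])
  with lhs have "- ((1 - ?c\<^sup>2) *\<^sub>R x) = - (a *\<^sub>R v + b *\<^sub>R w)"
    by (simp only: scaleR_minus_left)
  then have x_eq: "(1 - ?c\<^sup>2) *\<^sub>R x = a *\<^sub>R v + b *\<^sub>R w"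
    by (simp only: neg_equal_iff_equal)
  have "0 < a" "0 < b" using x(1) by (simp_all add: lens_def lens_open_def a_def b_def)
  define t where "t = b / (a + b)"
  have "(1 - t) *\<^sub>R v + t *\<^sub>R w = inverse (a + b) *\<^sub>R (a *\<^sub>R v + b *\<^sub>R w)"
    using \<open>0 < a\<close> \<open>0 < b\<close> by (simp add: t_def scaleR_add_right field_simps)
  also have "\<dots> = ((1 - ?c\<^sup>2) / (a + b)) *\<^sub>R x"
    by (simp flip: x_eq add: divide_inverse_commute)
  finally have "sgn ((1 - t) *\<^sub>R v + t *\<^sub>R w) = x"
    using \<open>0 < a\<close> \<open>0 < b\<close> one_minus_cos_sq_pos x(1)
    by (simp add: sgn_scaleR lens_def sgn_div_norm)
  moreover have "t \<in> {0..1}" using \<open>0 < a\<close> \<open>0 < b\<close> by (simp add: t_def)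
  ultimately show ?thesis unfolding sarc_def by blast
qed

lemma connected_half_lens: "connected (half_lens n)"
proof -
  define K where "K = {y. 0 < (v - (v \<bullet> w) *\<^sub>R w) \<bullet> y} \<inter> {y. 0 < (w - (v \<bullet> w) *\<^sub>R v) \<bullet> y}
    \<inter> {y. d * norm y < mid \<bullet> y} \<inter> {y. 0 < n \<bullet> y}"
  have "half_lens n = sphere 0 1 \<inter> K"
    by (auto simp: half_lens_def lens_def lens_open_def K_def)
  moreover have "convex K"
    unfolding K_def by (intro convex_Int convex_halfspace_gt convex_norm_cone d)
  moreover have "c *\<^sub>R y \<in> K" if "0 < c" "y \<in> K" for c y
    using that d by (auto simp: K_def inner_scaleR_right)
  moreover have "0 \<notin> K" by (simp add: K_def)
  ultimately show ?thesis
    using connected_sphere_Int_cone[of K] by simp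
qed

lemma lens_near_mid:
  assumes "x \<in> lens"
  shows "(norm (x - mid))\<^sup>2 < 2 - 2 * d"
proof -
  have "v + w \<noteq> 0" using ends by (auto simp: minor_arc_ends_def add_eq_0_iff2)
  then have "x \<bullet> x = 1" "mid \<bullet> mid = 1"
    using assms by (auto simp: lens_def mid_def norm_sgn simp flip: norm_eq_1)
  then have "(norm (x - mid))\<^sup>2 = 2 - 2 * (mid \<bullet> x)"
    by (simp add: power2_norm_eq_inner inner_diff_left inner_diff_right inner_commute[of x mid])
  then show ?thesis using assms by (simp add: lens_def lens_open_def)
qed

end

section \<open>Simple spherical quadrilaterals\<close>

lemma nxt_simps [simp]: "nxt 0 = 1" "nxt 1 = 2" "nxt (Suc 0) = 2" "nxt 2 = 3" "nxt 3 = 0"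
  by (simp_all add: nxt_def)

lemma less_4_cases: "(k::nat) < 4 \<Longrightarrow> k = 0 \<or> k = 1 \<or> k = 2 \<or> k = 3"
  by auto

lemma nxt_less_4: "k < 4 \<Longrightarrow> nxt k < 4"
  by (simp add: nxt_def)

lemma simple_squad_edge_ends:
  assumes "simple_squad V C" "k < 4"
  shows "minor_arc_ends (V k) (V (nxt k))"
proof -
  have "nxt k < 4" "nxt k \<noteq> k" using less_4_cases[OF assms(2)] by auto
  then show ?thesis using assms unfolding simple_squad_def minor_arc_ends_def by auto
qed

lemma simple_squad_qedge_Int:
  assumes sq: "simple_squad V C" and kl: "k < 4" "l < 4" "k \<noteq> l"
    and x: "x \<in> qedge V k" "x \<in> qedge V l"
  shows "x = V k \<or> x = V (nxt k)"
proof -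
  have adj: "qedge V j \<inter> qedge V (nxt j) = {V (nxt j)}" if "j < 4" for j
    using sq that unfolding simple_squad_def by blast
  have "qedge V 0 \<inter> qedge V 1 = {V 1}" "qedge V 1 \<inter> qedge V 2 = {V 2}"
       "qedge V 2 \<inter> qedge V 3 = {V 3}" "qedge V 3 \<inter> qedge V 0 = {V 0}"
    using adj[of 0] adj[of 1] adj[of 2] adj[of 3] by simp_all
  moreover have "qedge V 0 \<inter> qedge V 2 = {}" "qedge V 1 \<inter> qedge V 3 = {}"
    using sq unfolding simple_squad_def by auto
  ultimately show ?thesis
    using less_4_cases[OF kl(1)] less_4_cases[OF kl(2)] kl(3) x
    by (elim disjE) (auto simp: set_eq_iff)
qed

lemma simple_squad_vertex_on_qedge:
  assumes sq: "simple_squad V C" and "k < 4" "j < 4" "V j \<in> qedge V k"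
  shows "j = k \<or> j = nxt k"
proof (rule ccontr)
  assume "\<not> (j = k \<or> j = nxt k)"
  moreover have "V j \<in> qedge V j"
    using sarc_ends_mem(1)[OF simple_squad_edge_ends[OF sq \<open>j < 4\<close>]] by (simp add: qedge_def)
  ultimately have "V j = V k \<or> V j = V (nxt k)"
    using simple_squad_qedge_Int[OF sq \<open>k < 4\<close> \<open>j < 4\<close>] assms(4) by metis
  moreover have "nxt k < 4" using nxt_less_4 assms by blast
  ultimately show False using sq \<open>\<not> (j = k \<or> j = nxt k)\<close> assms unfolding simple_squad_def by metis
qed

lemma qboundary_eq: "qboundary V = qedge V 0 \<union> qedge V 1 \<union> qedge V 2 \<union> qedge V 3"
proof -
  have "{..<4::nat} = {0, 1, 2, 3}" by auto
  then show ?thesis by (auto simp: qboundary_def)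
qed

lemma qboundary_subset_sphere:
  assumes "simple_squad V C"
  shows "qboundary V \<subseteq> sphere 0 1"
  using sarc_subset_sphere simple_squad_edge_ends[OF assms] by (auto simp: qboundary_def qedge_def)

lemma qboundary_homeomorphic_circle:
  assumes sq: "simple_squad V C"
  shows "qboundary V homeomorphic sphere (0::complex) 1"
proof -
  define c where "c k = (\<lambda>t. sgn (linepath (V k) (V (nxt k)) t))" for k
  have arc: "arc (c k)" "path_image (c k) = qedge V k" "pathstart (c k) = V k"
    "pathfinish (c k) = V (nxt k)" if "k < 4" for k
    using arc_sgn_linepath[OF simple_squad_edge_ends[OF sq that]] by (auto simp: c_def qedge_def)
  have adj: "qedge V j \<inter> qedge V (nxt j) = {V (nxt j)}" if "j < 4" for j
    using sq that unfolding simple_squad_def by blast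
  have a0: "qedge V 0 \<inter> qedge V 1 = {V 1}" and a1: "qedge V 1 \<inter> qedge V 2 = {V 2}"
    and a2: "qedge V 2 \<inter> qedge V 3 = {V 3}" and a3: "qedge V 3 \<inter> qedge V 0 = {V 0}"
    using adj[of 0] adj[of 1] adj[of 2] adj[of 3] by simp_all
  have opp: "qedge V 0 \<inter> qedge V 2 = {}" "qedge V 1 \<inter> qedge V 3 = {}"
    using sq unfolding simple_squad_def by auto
  have arc01: "arc (c 0 +++ c 1)"
    by (rule arc_join) (use arc[of 0] arc[of 1] a0 in auto)
  have img01: "path_image (c 0 +++ c 1) = qedge V 0 \<union> qedge V 1"
    using arc[of 0] arc[of 1] by (simp add: path_image_join arc_imp_path)
  have arc012: "arc ((c 0 +++ c 1) +++ c 2)"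
    by (rule arc_join) (use arc01 arc[of 1] arc[of 2] a1 opp img01 in auto)
  have img012: "path_image ((c 0 +++ c 1) +++ c 2) = qedge V 0 \<union> qedge V 1 \<union> qedge V 2"
    using arc01 arc[of 1] arc[of 2] img01 by (simp add: path_image_join arc_imp_path)
  have "simple_path (((c 0 +++ c 1) +++ c 2) +++ c 3)"
    by (rule simple_path_join_loop) (use arc012 arc[of 0] arc[of 2] arc[of 3] img012 a2 a3 opp in auto)
  moreover have "path_image (((c 0 +++ c 1) +++ c 2) +++ c 3) = qboundary V"
    using arc012 arc[of 2] arc[of 3] img012 by (simp add: path_image_join arc_imp_path qboundary_eq Un_ac)
  moreover have "pathfinish (((c 0 +++ c 1) +++ c 2) +++ c 3) = pathstart (((c 0 +++ c 1) +++ c 2) +++ c 3)"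
    using arc[of 3] arc[of 0] by simp
  ultimately show ?thesis
    using homeomorphic_simple_path_image_circle[of _ 1 0] by fastforce
qed

section \<open>Tilings: edges are shared by exactly two tiles\<close>

text \<open>Edge k of the quadrilateral joins corners k and nxt k; its class is 0, 1, 2 according
  as its length is a, b, c.\<close>
definition edge_class :: "nat \<Rightarrow> nat" where
  "edge_class k = (if k = 1 then 1 else if k = 2 then 2 else 0)"

locale a2bc_tiled =
  fixes V :: "nat \<Rightarrow> real^3" and C :: "(real^3) set"
    and g :: "'i \<Rightarrow> real^3 \<Rightarrow> real^3" and I :: "'i set"
  assumes tiling: "a2bc_tiling V C g I"
begin

lemma simple_quad: "simple_squad V C"
  using tiling by (simp add: a2bc_tiling_def a2bc_quad_def)

lemma finite_tiles: "finite I"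
  using tiling by (simp add: a2bc_tiling_def)

lemma orthogonal_tile_map: "x \<in> I \<Longrightarrow> orthogonal_transformation (g x)"
  using tiling by (simp add: a2bc_tiling_def)

lemma tiles_cover: "(\<Union>i\<in>I. tile C g i) = sphere 0 1"
  using tiling by (simp add: a2bc_tiling_def)

lemma tile_interiors_disjoint: "x \<in> I \<Longrightarrow> y \<in> I \<Longrightarrow> x \<noteq> y \<Longrightarrow> g x ` C \<inter> g y ` C = {}"
  using tiling by (simp add: a2bc_tiling_def)

lemma edge_to_edge:
  assumes "x \<in> I" "y \<in> I" "x \<noteq> y"
  obtains "tile C g x \<inter> tile C g y = {}"
  | k where "k < 4" "tile C g x \<inter> tile C g y = {tvert V g x k}"
  | k l where "k < 4" "l < 4" "tile C g x \<inter> tile C g y = tedge V g x k" "tedge V g x k = tedge V g y l"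
proof -
  have "tile C g x \<inter> tile C g y = {} \<or>
        (\<exists>k<4. \<exists>l<4. tile C g x \<inter> tile C g y = {tvert V g x k} \<and> tvert V g x k = tvert V g y l) \<or>
        (\<exists>k<4. \<exists>l<4. tile C g x \<inter> tile C g y = tedge V g x k \<and> tedge V g x k = tedge V g y l)"
    using tiling assms unfolding a2bc_tiling_def by blast
  then show ?thesis using that by blast
qed

lemma region_component: "C \<in> components (sphere 0 1 - qboundary V)"
  using simple_quad by (simp add: simple_squad_def)

lemma tile_map_eq_iff: "x \<in> I \<Longrightarrow> g x u = g x u' \<longleftrightarrow> u = u'"
  using orthogonal_tile_map orthogonal_transformation_inj by (metis injD)

lemma continuous_on_tile_map: "x \<in> I \<Longrightarrow> continuous_on S (g x)"
  by (metis orthogonal_tile_map orthogonal_transformation_linear linear_conv_bounded_linear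
      linear_continuous_on)

lemma tile_map_in_sphere_iff: "x \<in> I \<Longrightarrow> g x u \<in> sphere 0 1 \<longleftrightarrow> u \<in> sphere 0 1"
  by (simp add: orthogonal_transformation_norm orthogonal_tile_map)

lemma tedge_eq_image: "x \<in> I \<Longrightarrow> tedge V g x k = g x ` qedge V k"
  by (simp add: tedge_def tvert_def qedge_def orthogonal_transformation_sarc orthogonal_tile_map)

lemma tedge_ends: "x \<in> I \<Longrightarrow> k < 4 \<Longrightarrow> minor_arc_ends (tvert V g x k) (tvert V g x (nxt k))"
  unfolding tvert_def
  using orthogonal_transformation_minor_arc_ends orthogonal_tile_map simple_squad_edge_ends[OF simple_quad]
  by blast

lemma tvert_eq_iff: "x \<in> I \<Longrightarrow> k < 4 \<Longrightarrow> l < 4 \<Longrightarrow> tvert V g x k = tvert V g x l \<longleftrightarrow> k = l"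
  using simple_quad tile_map_eq_iff unfolding tvert_def simple_squad_def by blast

lemma tedge_eq_ends:
  assumes "x \<in> I" "y \<in> I" "k < 4" "l < 4" "tedge V g x k = tedge V g y l"
  shows "(tvert V g y l = tvert V g x k \<and> tvert V g y (nxt l) = tvert V g x (nxt k)) \<or>
         (tvert V g y l = tvert V g x (nxt k) \<and> tvert V g y (nxt l) = tvert V g x k)"
  using sarc_ends_unique[OF tedge_ends[OF assms(1,3)] tedge_ends[OF assms(2,4)]] assms(5)
  by (simp add: tedge_def)

lemma compact_tedge: "x \<in> I \<Longrightarrow> k < 4 \<Longrightarrow> compact (tedge V g x k)"
  unfolding tedge_def using arc_sgn_linepath[OF tedge_ends] compact_path_image arc_imp_path by metis

lemma tile_map_qboundary: "x \<in> I \<Longrightarrow> g x ` qboundary V = (\<Union>k<4. tedge V g x k)"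
  using tedge_eq_image by (auto simp: qboundary_def)

lemma tile_eq_closure: "x \<in> I \<Longrightarrow> tile C g x = closure (g x ` C)"
  unfolding tile_def
  by (rule closure_injective_linear_image[OF orthogonal_transformation_linear orthogonal_transformation_inj])
    (use orthogonal_tile_map in auto)

lemma compact_tile: "x \<in> I \<Longrightarrow> compact (tile C g x)"
proof -
  assume x: "x \<in> I"
  have "bounded C"
    using region_component in_components_subset bounded_sphere bounded_subset by blast
  then show ?thesis
    unfolding tile_def using compact_continuous_image[OF continuous_on_tile_map[OF x]] compact_closure by blast
qed

lemma edge_class_eq:
  assumes "x \<in> I" "y \<in> I" "k < 4" "l < 4" "tedge V g x k = tedge V g y l"
  shows "edge_class k = edge_class l"
proof -
  obtain a b c where abc: "sdist (V 3) (V 0) = a" "sdist (V 0) (V 1) = a"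
    "sdist (V 1) (V 2) = b" "sdist (V 2) (V 3) = c" "a \<noteq> b" "b \<noteq> c" "a \<noteq> c"
    using tiling by (auto simp: a2bc_tiling_def a2bc_quad_def)
  define len :: "nat \<Rightarrow> real" where "len k = (if k = 1 then b else if k = 2 then c else a)" for k
  have sym: "sdist u u' = sdist u' u" for u u' by (simp add: sdist_def inner_commute)
  have len: "sdist (V k) (V (nxt k)) = len k" if "k < 4" for k
    using less_4_cases[OF that] abc sym by (auto simp: len_def)
  have "sdist (tvert V g x k) (tvert V g x (nxt k)) = sdist (tvert V g y l) (tvert V g y (nxt l))"
    using tedge_eq_ends[OF assms] sym by auto
  then have "len k = len l"
    using len assms orthogonal_transformation_sdist orthogonal_tile_map nxt_less_4 by (simp add: tvert_def)
  then show ?thesis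
    using less_4_cases[OF assms(3)] less_4_cases[OF assms(4)] abc by (auto simp: len_def edge_class_def)
qed

lemma tile_boundary_closure_both_sides:
  assumes x: "x \<in> I" and p: "p \<in> g x ` qboundary V"
  shows "p \<in> tile C g x" "p \<in> closure (sphere 0 1 - tile C g x)"
proof -
  obtain u where u: "u \<in> qboundary V" "p = g x u" using p by blast
  note Jordan = Jordan_sphere_closure_both_sides[OF qboundary_subset_sphere[OF simple_quad]
      qboundary_homeomorphic_circle[OF simple_quad] region_component u(1)]
  show "p \<in> tile C g x" using Jordan(1) u(2) by (simp add: tile_def)
  have lin: "linear (g x)" "inj (g x)"
    using orthogonal_tile_map[OF x] orthogonal_transformation_linear orthogonal_transformation_inj by blast+
  have "g x ` (sphere 0 1 - closure C) \<subseteq> sphere 0 1 - tile C g x"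
    using tile_map_in_sphere_iff[OF x] tile_map_eq_iff[OF x] by (auto simp: tile_def)
  then have "closure (g x ` (sphere 0 1 - closure C)) \<subseteq> closure (sphere 0 1 - tile C g x)"
    by (rule closure_mono)
  moreover have "p \<in> closure (g x ` (sphere 0 1 - closure C))"
    using Jordan(2) u(2) closure_injective_linear_image[OF lin] by blast
  ultimately show "p \<in> closure (sphere 0 1 - tile C g x)" by blast
qed

lemma tedge_shared:
  assumes x: "x \<in> I" and k: "k < 4"
  obtains y l where "y \<in> I" "y \<noteq> x" "l < 4" "tedge V g y l = tedge V g x k"
proof -
  define m where "m = sgn (V k + V (nxt k))"
  have m: "m \<in> qedge V k" "m \<noteq> V k" "m \<noteq> V (nxt k)"
    using sarc_midpoint[OF simple_squad_edge_ends[OF simple_quad k]] by (simp_all add: m_def qedge_def)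
  then have "g x m \<in> g x ` qboundary V" unfolding qboundary_def using k by blast
  note both_sides = tile_boundary_closure_both_sides[OF x this]
  have "sphere 0 1 - tile C g x \<subseteq> (\<Union>y\<in>I - {x}. tile C g y)"
    using tiles_cover by blast
  moreover have "closed (\<Union>y\<in>I - {x}. tile C g y)"
    using finite_tiles compact_tile by (intro closed_UN) (auto intro: compact_imp_closed)
  ultimately have "g x m \<in> (\<Union>y\<in>I - {x}. tile C g y)"
    using both_sides(2) closure_minimal by blast
  then obtain y where y: "y \<in> I" "y \<noteq> x" "g x m \<in> tile C g y" by auto
  then have mxy: "g x m \<in> tile C g x \<inter> tile C g y" using both_sides(1) by blast
  show ?thesis
  proof (rule edge_to_edge[OF x y(1) y(2)[symmetric]])
    assume "tile C g x \<inter> tile C g y = {}" then show ?thesis using mxy by blast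
  next
    fix k' assume "k' < 4" "tile C g x \<inter> tile C g y = {tvert V g x k'}"
    then have "g x m = g x (V k')" using mxy by (simp add: tvert_def)
    then have "m = V k'" using tile_map_eq_iff[OF x] by simp
    then have "k' = k \<or> k' = nxt k"
      using simple_squad_vertex_on_qedge[OF simple_quad k \<open>k' < 4\<close>] m(1) by simp
    then show ?thesis using m(2,3) \<open>m = V k'\<close> by auto
  next
    fix k' l assume kl: "k' < 4" "l < 4" "tile C g x \<inter> tile C g y = tedge V g x k'"
      "tedge V g x k' = tedge V g y l"
    then have "g x m \<in> g x ` qedge V k'" using mxy by (simp add: tedge_eq_image[OF x])
    then have "m \<in> qedge V k'" using tile_map_eq_iff[OF x] by auto
    have "k' = k"
    proof (rule ccontr)
      assume "k' \<noteq> k"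
      then show False
        using simple_squad_qedge_Int[OF simple_quad k kl(1) _ m(1) \<open>m \<in> qedge V k'\<close>] m(2,3) by auto
    qed
    then show ?thesis using that[OF y(1,2) kl(2)] kl(4) by simp
  qed
qed

lemma connected_subset_tile_interior:
  assumes x: "x \<in> I" and H: "connected H" "H \<subseteq> sphere 0 1 - g x ` qboundary V"
    "H \<inter> g x ` C \<noteq> {}"
  shows "H \<subseteq> g x ` C"
proof -
  define h where "h = inv (g x)"
  have orth_h: "orthogonal_transformation h"
    using orthogonal_tile_map[OF x] orthogonal_transformation_inv h_def by blast
  have hg: "h (g x u) = u" for u
    unfolding h_def by (rule inv_f_f[OF orthogonal_transformation_inj[OF orthogonal_tile_map[OF x]]])
  have gh: "g x (h z) = z" for z
    unfolding h_def by (rule surj_f_inv_f[OF orthogonal_transformation_surj[OF orthogonal_tile_map[OF x]]])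
  have "bounded_linear h"
    using orth_h orthogonal_transformation_linear linear_conv_bounded_linear by blast
  then have "connected (h ` H)"
    using H(1) connected_continuous_image linear_continuous_on by blast
  moreover have "h ` H \<subseteq> sphere 0 1 - qboundary V"
    using H(2) gh orth_h orthogonal_transformation_norm by (fastforce simp: image_iff)
  moreover have "C \<inter> h ` H \<noteq> {}"
  proof -
    obtain u where "u \<in> C" "g x u \<in> H" using H(3) by blast
    then have "u \<in> h ` H" using hg by (metis image_eqI)
    then show ?thesis using \<open>u \<in> C\<close> by blast
  qed
  ultimately have "h ` H \<subseteq> C" using components_maximal[OF region_component] by blast
  then have "g x ` h ` H \<subseteq> g x ` C" by blast
  then show ?thesis using gh by (simp add: image_image)
qed

end

context a2bc_tiled
begin

definition tedge_mid :: "'i \<Rightarrow> nat \<Rightarrow> real^3" where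
  "tedge_mid x k = sgn (tvert V g x k + tvert V g x (nxt k))"

lemma tedge_mid_eq:
  assumes "x \<in> I" "y \<in> I" "k < 4" "l < 4" "tedge V g x k = tedge V g y l"
  shows "tedge_mid y l = tedge_mid x k"
  using tedge_eq_ends[OF assms] by (auto simp: tedge_mid_def add.commute)

lemma tedge_mid_ball_avoids_other_edges:
  assumes t: "t \<in> I" "j < 4"
  obtains r where "0 < r" "\<And>j'. j' < 4 \<Longrightarrow> j' \<noteq> j \<Longrightarrow> ball (tedge_mid t j) r \<inter> tedge V g t j' = {}"
proof -
  note mid = sarc_midpoint[OF tedge_ends[OF t]]
  obtain u where u: "u \<in> qedge V j" "tedge_mid t j = g t u"
    using mid(1) tedge_eq_image[OF t(1)] by (auto simp: tedge_mid_def tedge_def)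
  then have "u \<noteq> V j" "u \<noteq> V (nxt j)"
    using mid(2,3) by (auto simp: tedge_mid_def tvert_def)
  have not_other: "tedge_mid t j \<notin> tedge V g t j'" if "j' < 4" "j' \<noteq> j" for j'
  proof
    assume "tedge_mid t j \<in> tedge V g t j'"
    then have "u \<in> qedge V j'"
      using u(2) tile_map_eq_iff[OF t(1)] by (auto simp: tedge_eq_image[OF t(1)])
    then show False
      using simple_squad_qedge_Int[OF simple_quad t(2) that(1)] that(2) u(1)
        \<open>u \<noteq> V j\<close> \<open>u \<noteq> V (nxt j)\<close> by blast
  qed
  define F where "F = (\<Union>j'\<in>{j'. j' < 4 \<and> j' \<noteq> j}. tedge V g t j')"
  have "closed F"
    unfolding F_def using compact_tedge[OF t(1)] by (intro closed_UN) (auto intro: compact_imp_closed)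
  moreover have "tedge_mid t j \<notin> F" using not_other by (auto simp: F_def)
  ultimately obtain r where "0 < r" "ball (tedge_mid t j) r \<subseteq> - F"
    by (metis open_Compl open_contains_ball ComplI)
  then show ?thesis using that[of r] unfolding F_def by blast
qed

lemma half_lens_in_tile:
  assumes L: "arc_lens v w d" and t: "t \<in> I" "j < 4" and e: "tedge V g t j = sarc v w"
    and far: "\<And>j'. j' < 4 \<Longrightarrow> j' \<noteq> j \<Longrightarrow> arc_lens.lens v w d \<inter> tedge V g t j' = {}"
  obtains n where "n = arc_lens.normal v w \<or> n = - arc_lens.normal v w"
    "arc_lens.half_lens v w d n \<subseteq> g t ` C" "arc_lens.half_lens v w d n \<noteq> {}"
proof -
  interpret L: arc_lens v w d by (rule L)
  have "L.mid \<in> g t ` qboundary V" using L.mid_in_sarc e t tile_map_qboundary by auto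
  then have "L.mid \<in> closure (g t ` C)"
    using tile_boundary_closure_both_sides(1)[OF t(1)] tile_eq_closure[OF t(1)] by simp
  then obtain q where q: "q \<in> L.lens_open" "q \<in> g t ` C"
    using L.open_lens_open L.mid_in_lens_open open_Int_closure_eq_empty by blast
  have C_sub: "C \<subseteq> sphere 0 1 - qboundary V"
    using region_component in_components_subset by blast
  then have "q \<in> sphere 0 1" "q \<notin> g t ` qboundary V"
    using q(2) tile_map_in_sphere_iff[OF t(1)] tile_map_eq_iff[OF t(1)] by auto
  then have "q \<in> L.lens" "q \<notin> sarc v w"
    using q(1) e t tile_map_qboundary by (auto simp: L.lens_def)
  then have q_side: "L.normal \<bullet> q \<noteq> 0" using L.lens_normal_plane_subset_sarc by blast
  define n where "n = (if 0 < L.normal \<bullet> q then L.normal else - L.normal)"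
  have n: "n = L.normal \<or> n = - L.normal" by (simp add: n_def)
  have q_half: "q \<in> L.half_lens n"
    using \<open>q \<in> L.lens\<close> q_side by (auto simp: L.half_lens_def n_def)
  have "L.half_lens n \<subseteq> sphere 0 1 - g t ` qboundary V"
  proof
    fix u assume u: "u \<in> L.half_lens n"
    then have "u \<in> L.lens" "L.normal \<bullet> u \<noteq> 0"
      using n by (auto simp: L.half_lens_def)
    then have "u \<notin> tedge V g t j'" if "j' < 4" for j'
      using far[of j'] that L.normal_orthogonal_sarc e by (cases "j' = j") auto
    then show "u \<in> sphere 0 1 - g t ` qboundary V"
      using \<open>u \<in> L.lens\<close> tile_map_qboundary[OF t(1)] by (auto simp: L.lens_def)
  qed
  then have "L.half_lens n \<subseteq> g t ` C"
    using connected_subset_tile_interior[OF t(1) L.connected_half_lens] q q_half by blast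
  then show ?thesis using that n q_half by blast
qed

lemma tedge_not_in_three_tiles:
  assumes x: "x \<in> I" "k < 4" and y: "y \<in> I" "l < 4" "tedge V g y l = tedge V g x k"
    and z: "z \<in> I" "m < 4" "tedge V g z m = tedge V g x k"
    and distinct: "x \<noteq> y" "x \<noteq> z" "y \<noteq> z"
  shows False
proof -
  define v w where "v = tvert V g x k" and "w = tvert V g x (nxt k)"
  have mid: "tedge_mid y l = tedge_mid x k" "tedge_mid z m = tedge_mid x k"
    using tedge_mid_eq x y z by metis+
  obtain rx where rx: "0 < rx" "\<And>j'. j' < 4 \<Longrightarrow> j' \<noteq> k \<Longrightarrow> ball (tedge_mid x k) rx \<inter> tedge V g x j' = {}"
    using tedge_mid_ball_avoids_other_edges[OF x] by blast
  obtain ry where ry: "0 < ry" "\<And>j'. j' < 4 \<Longrightarrow> j' \<noteq> l \<Longrightarrow> ball (tedge_mid x k) ry \<inter> tedge V g y j' = {}"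
    using tedge_mid_ball_avoids_other_edges[OF y(1,2)] mid(1) by metis
  obtain rz where rz: "0 < rz" "\<And>j'. j' < 4 \<Longrightarrow> j' \<noteq> m \<Longrightarrow> ball (tedge_mid x k) rz \<inter> tedge V g z j' = {}"
    using tedge_mid_ball_avoids_other_edges[OF z(1,2)] mid(2) by metis
  define r where "r = min rx (min ry rz)"
  have r: "0 < r" "r \<le> rx" "r \<le> ry" "r \<le> rz" using rx ry rz by (auto simp: r_def)
  define d where "d = max 0 (1 - r\<^sup>2 / 2)"
  have d: "0 \<le> d" "d < 1" "2 - 2 * d \<le> r\<^sup>2" using r(1) by (auto simp: d_def max_def)
  interpret L: arc_lens v w d
    using tedge_ends[OF x] d by unfold_locales (simp_all add: v_def w_def)
  have "L.mid = tedge_mid x k" using L.mid_def by (simp add: tedge_mid_def v_def w_def)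
  have "L.lens \<subseteq> ball (tedge_mid x k) r"
  proof
    fix u assume "u \<in> L.lens"
    then have "(norm (u - L.mid))\<^sup>2 < r\<^sup>2" using L.lens_near_mid d(3) by fastforce
    then show "u \<in> ball (tedge_mid x k) r"
      using r(1) \<open>L.mid = tedge_mid x k\<close>
      by (simp add: dist_norm norm_minus_commute power_less_imp_less_base)
  qed
  then have far: "L.lens \<inter> tedge V g t j' = {}"
    if "ball (tedge_mid x k) r' \<inter> tedge V g t j' = {}" "r \<le> r'" for t j' r'
    using that subset_ball[of r r' "tedge_mid x k"] by blast
  have e: "tedge V g x k = sarc v w" by (simp add: tedge_def v_def w_def)
  obtain nx where nx: "nx = L.normal \<or> nx = - L.normal" "L.half_lens nx \<subseteq> g x ` C" "L.half_lens nx \<noteq> {}"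
    using half_lens_in_tile[OF L.arc_lens_axioms x e] far rx(2) r(2) by metis
  obtain ny where ny: "ny = L.normal \<or> ny = - L.normal" "L.half_lens ny \<subseteq> g y ` C" "L.half_lens ny \<noteq> {}"
    using half_lens_in_tile[OF L.arc_lens_axioms y(1,2)] y(3) e far ry(2) r(3) by metis
  obtain nz where nz: "nz = L.normal \<or> nz = - L.normal" "L.half_lens nz \<subseteq> g z ` C" "L.half_lens nz \<noteq> {}"
    using half_lens_in_tile[OF L.arc_lens_axioms z(1,2)] z(3) e far rz(2) r(4) by metis
  \<comment> \<open>two of the three tiles contain the same half of the lens\<close>
  have "nx = ny \<or> nx = nz \<or> ny = nz" using nx(1) ny(1) nz(1) by auto
  then show False
    using nx ny nz tile_interiors_disjoint x(1) y(1) z(1) distinct by blast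
qed

end

section \<open>Counting corners and edges at a vertex\<close>

lemma sum_card_filter_swap:
  assumes "finite A" "finite B"
  shows "(\<Sum>a\<in>A. card {b \<in> B. R a b}) = (\<Sum>b\<in>B. card {a \<in> A. R a b})"
proof -
  have "card {b \<in> B. R a b} = (\<Sum>b\<in>B. if R a b then 1 else 0)" for a
    using assms(2) by (simp add: sum.inter_filter[symmetric])
  moreover have "card {a \<in> A. R a b} = (\<Sum>a\<in>A. if R a b then 1 else 0)" for b
    using assms(1) by (simp add: sum.inter_filter[symmetric])
  ultimately show ?thesis by (simp add: sum.swap[of _ A B])
qed

lemma card_le_2_if_no_three:
  assumes "finite A" "\<And>a b c. a \<in> A \<Longrightarrow> b \<in> A \<Longrightarrow> c \<in> A \<Longrightarrow> a \<noteq> b \<Longrightarrow> a \<noteq> c \<Longrightarrow> b \<noteq> c \<Longrightarrow> False"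
  shows "card A \<le> 2"
proof (rule ccontr)
  assume "\<not> card A \<le> 2"
  then obtain B where "B \<subseteq> A" "card B = 3" using obtain_subset_with_card_n[of 3 A] by auto
  then obtain a b c where "B = {a, b, c}" "a \<noteq> b" "a \<noteq> c" "b \<noteq> c" using card_3_iff by metis
  then show False using assms(2) \<open>B \<subseteq> A\<close> by blast
qed

definition prv :: "nat \<Rightarrow> nat" where
  "prv k = (k + 3) mod 4"

lemma prv_simps [simp]: "prv 0 = 3" "prv 1 = 0" "prv (Suc 0) = 0" "prv 2 = 1" "prv 3 = 2"
  by (simp_all add: prv_def)

lemma nxt_prv: "k < 4 \<Longrightarrow> nxt (prv k) = k"
  and prv_nxt: "k < 4 \<Longrightarrow> prv (nxt k) = k"
  and prv_less_4: "k < 4 \<Longrightarrow> prv k < 4"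
  by (auto dest: less_4_cases)

definition class_incidence :: "nat \<Rightarrow> nat \<Rightarrow> nat" where
  "class_incidence n k = (if edge_class k = n then 1 else 0) + (if edge_class (prv k) = n then 1 else 0)"

lemma vertex_type_arith:
  fixes n0 n1 n2 A0 A1 A2 A3 :: nat
  assumes "2 * n0 = 2 * A0 + A1 + A3" "2 * n1 = A1 + A2" "2 * n2 = A2 + A3" "n0 + n1 + n2 = 3"
    and "1 \<le> A0 \<Longrightarrow> 2 \<le> n0"
  shows "(A0, A1, A3, A2) \<in> {(3, 0, 0, 0), (1, 2, 0, 0), (1, 0, 2, 0), (0, 1, 1, 1)}"
proof -
  have "A0 + A1 + A2 + A3 = 3" using assms(1-4) by linarith
  then have "A1 \<in> {0, 1, 2, 3}" "A2 \<in> {0, 1, 2, 3}" "A3 \<in> {0, 1, 2, 3}" by auto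
  then show ?thesis using assms \<open>A0 + A1 + A2 + A3 = 3\<close> by (elim insertE emptyE) (simp; presburger)+
qed

context a2bc_tiled
begin

definition tiles_at :: "real^3 \<Rightarrow> 'i set" where
  "tiles_at v = {x \<in> I. \<exists>k<4. tvert V g x k = v}"

definition corner_at :: "real^3 \<Rightarrow> 'i \<Rightarrow> nat" where
  "corner_at v x = (THE k. k < 4 \<and> tvert V g x k = v)"

definition corner_edges :: "real^3 \<Rightarrow> 'i \<Rightarrow> (real^3) set set" where
  "corner_edges v x = {tedge V g x (corner_at v x), tedge V g x (prv (corner_at v x))}"

definition edge_has_class :: "nat \<Rightarrow> (real^3) set \<Rightarrow> bool" where
  "edge_has_class n e \<longleftrightarrow> (\<exists>y\<in>I. \<exists>j<4. tedge V g y j = e \<and> edge_class j = n)"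

lemma corner_at:
  assumes "x \<in> tiles_at v"
  shows "corner_at v x < 4" "tvert V g x (corner_at v x) = v"
proof -
  obtain k where k: "k < 4" "tvert V g x k = v" "x \<in> I" using assms by (auto simp: tiles_at_def)
  then have "corner_at v x = k"
    unfolding corner_at_def using tvert_eq_iff by (intro the_equality) auto
  then show "corner_at v x < 4" "tvert V g x (corner_at v x) = v" using k by auto
qed

lemma corner_at_eq:
  assumes "x \<in> I" "k < 4" "tvert V g x k = v"
  shows "x \<in> tiles_at v" "corner_at v x = k"
proof -
  show x: "x \<in> tiles_at v" using assms by (auto simp: tiles_at_def)
  have "tvert V g x (corner_at v x) = tvert V g x k" using corner_at[OF x] assms(3) by simp
  then show "corner_at v x = k" using tvert_eq_iff[OF assms(1) corner_at(1)[OF x] assms(2)] by simp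
qed

lemma tedge_in_corner_edges:
  assumes x: "x \<in> I" and k: "k < 4" and v: "v = tvert V g x k \<or> v = tvert V g x (nxt k)"
  shows "x \<in> tiles_at v" "tedge V g x k \<in> corner_edges v x"
proof -
  from v have "x \<in> tiles_at v \<and> tedge V g x k \<in> corner_edges v x"
  proof
    assume "v = tvert V g x k"
    note c = corner_at_eq[OF x k this[symmetric]]
    then show ?thesis by (simp add: corner_edges_def)
  next
    assume "v = tvert V g x (nxt k)"
    note c = corner_at_eq[OF x nxt_less_4[OF k] this[symmetric]]
    then show ?thesis using prv_nxt[OF k] by (simp add: corner_edges_def)
  qed
  then show "x \<in> tiles_at v" "tedge V g x k \<in> corner_edges v x" by simp_all
qed

lemma edges_at_eq: "edges_at V g I v = (\<Union>x\<in>tiles_at v. corner_edges v x)"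
proof
  show "edges_at V g I v \<subseteq> (\<Union>x\<in>tiles_at v. corner_edges v x)"
  proof
    fix e assume "e \<in> edges_at V g I v"
    then obtain x k where "x \<in> I" "k < 4" "v = tvert V g x k \<or> v = tvert V g x (nxt k)"
      "e = tedge V g x k"
      unfolding edges_at_def by blast
    then show "e \<in> (\<Union>x\<in>tiles_at v. corner_edges v x)"
      using tedge_in_corner_edges[of x k v] by blast
  qed
  have "corner_edges v x \<subseteq> edges_at V g I v" if x: "x \<in> tiles_at v" for x
  proof -
    define k where "k = corner_at v x"
    have xI: "x \<in> I" and k: "k < 4" "tvert V g x k = v"
      using x corner_at[OF x] by (simp_all add: tiles_at_def k_def)
    have "tedge V g x k \<in> edges_at V g I v"
      unfolding edges_at_def using xI k by blast
    moreover have "v = tvert V g x (nxt (prv k))" using k nxt_prv by simp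
    then have "tedge V g x (prv k) \<in> edges_at V g I v"
      unfolding edges_at_def using xI prv_less_4[OF k(1)] by blast
    ultimately show ?thesis by (simp add: corner_edges_def k_def)
  qed
  then show "(\<Union>x\<in>tiles_at v. corner_edges v x) \<subseteq> edges_at V g I v" by blast
qed

lemma finite_tiles_at: "finite (tiles_at v)"
  using finite_tiles by (simp add: tiles_at_def)

lemma finite_edges_at: "finite (edges_at V g I v)"
  unfolding edges_at_eq using finite_tiles_at by (simp add: corner_edges_def)

lemma card_corner_edges:
  assumes x: "x \<in> tiles_at v"
  shows "card (corner_edges v x) = 2"
proof -
  define k where "k = corner_at v x"
  have xI: "x \<in> I" using x by (simp add: tiles_at_def)
  have k: "k < 4" using corner_at[OF x] by (simp add: k_def)
  have "tedge V g x k \<noteq> tedge V g x (prv k)"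
  proof
    assume "tedge V g x k = tedge V g x (prv k)"
    then have "tvert V g x k = tvert V g x (prv k) \<or> tvert V g x (nxt k) = tvert V g x (prv k)"
      using tedge_eq_ends[OF xI xI prv_less_4[OF k] k] nxt_prv[OF k] by auto
    then have "k = prv k \<or> nxt k = prv k"
      using tvert_eq_iff xI k prv_less_4 nxt_less_4 by metis
    then show False using less_4_cases[OF k] by auto
  qed
  then show ?thesis by (simp add: corner_edges_def k_def)
qed

lemma card_tiles_at_edge:
  assumes e: "e \<in> edges_at V g I v"
  shows "card {x \<in> tiles_at v. e \<in> corner_edges v x} = 2"
proof (rule antisym)
  have edge_of: "\<exists>j<4. tedge V g t j = e" if "t \<in> tiles_at v" "e \<in> corner_edges v t" for t
    using that corner_at prv_less_4 unfolding corner_edges_def by blast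
  show "card {x \<in> tiles_at v. e \<in> corner_edges v x} \<le> 2"
  proof (rule card_le_2_if_no_three)
    show "finite {x \<in> tiles_at v. e \<in> corner_edges v x}" using finite_tiles_at by simp
  next
    fix a b c assume abc: "a \<in> {x \<in> tiles_at v. e \<in> corner_edges v x}"
      "b \<in> {x \<in> tiles_at v. e \<in> corner_edges v x}" "c \<in> {x \<in> tiles_at v. e \<in> corner_edges v x}"
      "a \<noteq> b" "a \<noteq> c" "b \<noteq> c"
    obtain ja where ja: "ja < 4" "tedge V g a ja = e" using edge_of abc(1) by blast
    obtain jb where jb: "jb < 4" "tedge V g b jb = e" using edge_of abc(2) by blast
    obtain jc where jc: "jc < 4" "tedge V g c jc = e" using edge_of abc(3) by blast
    have "a \<in> I" "b \<in> I" "c \<in> I" using abc(1-3) by (auto simp: tiles_at_def)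
    then show False
      using tedge_not_in_three_tiles[of a ja b jb c jc] ja jb jc abc(4-6) by simp
  qed
next
  obtain x k where xk: "x \<in> I" "k < 4" "e = tedge V g x k"
    "v = tvert V g x k \<or> v = tvert V g x (nxt k)"
    using e unfolding edges_at_def by blast
  obtain y l where yl: "y \<in> I" "y \<noteq> x" "l < 4" "tedge V g y l = tedge V g x k"
    using tedge_shared[OF xk(1,2)] by blast
  have "v = tvert V g y l \<or> v = tvert V g y (nxt l)"
    using tedge_eq_ends[OF xk(1) yl(1) xk(2) yl(3) yl(4)[symmetric]] xk(4) by auto
  then have "{x, y} \<subseteq> {x \<in> tiles_at v. e \<in> corner_edges v x}"
    using tedge_in_corner_edges[OF yl(1,3)] tedge_in_corner_edges[OF xk(1,2,4)] yl(4) xk(3) by auto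
  then have "card {x, y} \<le> card {x \<in> tiles_at v. e \<in> corner_edges v x}"
    using finite_tiles_at by (intro card_mono) auto
  then show "2 \<le> card {x \<in> tiles_at v. e \<in> corner_edges v x}" using yl(2) by simp
qed

lemma edge_has_class_tedge_iff: "x \<in> I \<Longrightarrow> j < 4 \<Longrightarrow> edge_has_class n (tedge V g x j) \<longleftrightarrow> edge_class j = n"
  unfolding edge_has_class_def using edge_class_eq by metis

lemma sum_corner_at: "(\<Sum>x\<in>tiles_at v. f (corner_at v x)) = (\<Sum>j<4. f j * ncorner V g I j v)"
proof -
  have "(\<Sum>x\<in>tiles_at v. f (corner_at v x)) = (\<Sum>j<4. \<Sum>x\<in>{x \<in> tiles_at v. corner_at v x = j}. f (corner_at v x))"
    by (rule sum.group[symmetric]) (use finite_tiles_at corner_at in auto)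
  also have "\<dots> = (\<Sum>j<4. f j * card {x \<in> tiles_at v. corner_at v x = j})"
    by (simp add: mult.commute)
  also have "\<dots> = (\<Sum>j<4. f j * ncorner V g I j v)"
  proof (rule sum.cong[OF refl])
    fix j :: nat assume "j \<in> {..<4}"
    then have "{x \<in> tiles_at v. corner_at v x = j} = {i \<in> I. tvert V g i j = v}"
      using corner_at corner_at_eq by (auto simp: tiles_at_def)
    then show "f j * card {x \<in> tiles_at v. corner_at v x = j} = f j * ncorner V g I j v"
      by (simp add: ncorner_def)
  qed
  finally show ?thesis .
qed

lemma card_corner_edges_class:
  assumes x: "x \<in> tiles_at v"
  shows "card {e \<in> corner_edges v x. edge_has_class n e} = class_incidence n (corner_at v x)"
proof -
  define k where "k = corner_at v x"
  have xI: "x \<in> I" and k: "k < 4" using x corner_at[OF x] by (simp_all add: tiles_at_def k_def)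
  have "tedge V g x k \<noteq> tedge V g x (prv k)"
    using card_corner_edges[OF x] by (auto simp: corner_edges_def k_def)
  moreover have "{e \<in> corner_edges v x. edge_has_class n e} =
      (if edge_class k = n then {tedge V g x k} else {}) \<union>
      (if edge_class (prv k) = n then {tedge V g x (prv k)} else {})"
    using edge_has_class_tedge_iff[OF xI k] edge_has_class_tedge_iff[OF xI prv_less_4[OF k]]
    by (auto simp: corner_edges_def k_def)
  ultimately show ?thesis by (simp add: class_incidence_def k_def)
qed

lemma class_count:
  "2 * card {e \<in> edges_at V g I v. edge_has_class n e} = (\<Sum>j<4. class_incidence n j * ncorner V g I j v)"
proof -
  let ?E = "{e \<in> edges_at V g I v. edge_has_class n e}"
  have "2 * card ?E = (\<Sum>e\<in>?E. card {x \<in> tiles_at v. e \<in> corner_edges v x})"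
    using card_tiles_at_edge by simp
  also have "\<dots> = (\<Sum>x\<in>tiles_at v. card {e \<in> ?E. e \<in> corner_edges v x})"
    by (rule sum_card_filter_swap[symmetric]) (use finite_tiles_at finite_edges_at in auto)
  also have "\<dots> = (\<Sum>x\<in>tiles_at v. card {e \<in> corner_edges v x. edge_has_class n e})"
    by (rule sum.cong[OF refl], rule arg_cong[where f = card]) (auto simp: edges_at_eq)
  also have "\<dots> = (\<Sum>x\<in>tiles_at v. class_incidence n (corner_at v x))"
    by (rule sum.cong[OF refl]) (rule card_corner_edges_class)
  also have "\<dots> = (\<Sum>j<4. class_incidence n j * ncorner V g I j v)"
    by (rule sum_corner_at)
  finally show ?thesis .
qed

lemma card_edges_at_by_class:
  "card (edges_at V g I v) = card {e \<in> edges_at V g I v. edge_has_class 0 e}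
     + card {e \<in> edges_at V g I v. edge_has_class 1 e} + card {e \<in> edges_at V g I v. edge_has_class 2 e}"
proof -
  define X where "X n = {e \<in> edges_at V g I v. edge_has_class n e}" for n
  have "edge_has_class 0 e \<or> edge_has_class 1 e \<or> edge_has_class 2 e" if e: "e \<in> edges_at V g I v" for e
  proof -
    obtain i k where "i \<in> I" "k < 4" "e = tedge V g i k"
      using e unfolding edges_at_def by blast
    then have "edge_has_class (edge_class k) e" using edge_has_class_tedge_iff by simp
    moreover have "edge_class k = 0 \<or> edge_class k = 1 \<or> edge_class k = 2"
      by (simp add: edge_class_def)
    ultimately show ?thesis by auto
  qed
  then have E_eq: "edges_at V g I v = X 0 \<union> X 1 \<union> X 2" unfolding X_def by blast
  have class_unique: "n = n'" if n: "edge_has_class n e" and n': "edge_has_class n' e" for n n' e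
  proof -
    obtain y j where "y \<in> I" "j < 4" "tedge V g y j = e" "edge_class j = n"
      using n unfolding edge_has_class_def by blast
    then show ?thesis using n' edge_has_class_tedge_iff by blast
  qed
  have disjoint: "X 0 \<inter> X 1 = {}" "(X 0 \<union> X 1) \<inter> X 2 = {}"
    using class_unique[of 0 _ 1] class_unique[of 0 _ 2] class_unique[of 1 _ 2] unfolding X_def by auto
  have finite: "finite (X n)" for n using finite_edges_at by (simp add: X_def)
  have "card (X 0 \<union> X 1 \<union> X 2) = card (X 0) + card (X 1) + card (X 2)"
    using finite disjoint by (simp add: card_Un_disjoint)
  then have "card (edges_at V g I v) = card (X 0) + card (X 1) + card (X 2)"
    by (subst E_eq)
  then show ?thesis by (simp only: X_def)
qed

lemma two_a_edges_at_alpha: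
  assumes "1 \<le> ncorner V g I 0 v"
  shows "2 \<le> card {e \<in> edges_at V g I v. edge_has_class 0 e}"
proof -
  have "card {i \<in> I. tvert V g i 0 = v} \<noteq> 0"
    using assms by (simp add: ncorner_def)
  then have "{i \<in> I. tvert V g i 0 = v} \<noteq> {}"
    by (metis card.empty)
  then obtain x where x: "x \<in> I" "tvert V g x 0 = v" by blast
  have c: "x \<in> tiles_at v" "corner_at v x = 0"
    using corner_at_eq[OF x(1) _ x(2)] by simp_all
  have "corner_edges v x \<subseteq> edges_at V g I v"
    unfolding edges_at_eq using c(1) by blast
  moreover have "\<forall>e \<in> corner_edges v x. edge_has_class 0 e"
    using c(2) edge_has_class_tedge_iff[OF x(1)] by (simp add: corner_edges_def edge_class_def)
  ultimately have "corner_edges v x \<subseteq> {e \<in> edges_at V g I v. edge_has_class 0 e}"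
    by blast
  then have "card (corner_edges v x) \<le> card {e \<in> edges_at V g I v. edge_has_class 0 e}"
    using finite_edges_at by (intro card_mono) auto
  then show ?thesis using card_corner_edges c by simp
qed

lemma degree_3_vertex_types:
  assumes "card (edges_at V g I v) = 3"
  shows "(ncorner V g I 0 v, ncorner V g I 1 v, ncorner V g I 3 v, ncorner V g I 2 v)
           \<in> {(3, 0, 0, 0), (1, 2, 0, 0), (1, 0, 2, 0), (0, 1, 1, 1)}"
proof -
  have sum_4: "(\<Sum>j<4. h j) = h 0 + h 1 + h 2 + h 3" for h :: "nat \<Rightarrow> nat"
    by (simp add: eval_nat_numeral)
  define A where "A j = ncorner V g I j v" for j
  define n where "n i = card {e \<in> edges_at V g I v. edge_has_class i e}" for i
  have count: "2 * n i = (\<Sum>j<4. class_incidence i j * A j)" for i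
    using class_count by (simp add: A_def n_def)
  have "2 * n 0 = 2 * A 0 + A 1 + A 3" "2 * n 1 = A 1 + A 2" "2 * n 2 = A 2 + A 3"
    using count[of 0] count[of 1] count[of 2] by (simp_all add: sum_4 class_incidence_def edge_class_def)
  moreover have "n 0 + n 1 + n 2 = 3"
    using assms card_edges_at_by_class by (simp add: n_def)
  moreover have "1 \<le> A 0 \<Longrightarrow> 2 \<le> n 0"
    using two_a_edges_at_alpha by (simp add: A_def n_def)
  ultimately have "(A 0, A 1, A 3, A 2) \<in> {(3, 0, 0, 0), (1, 2, 0, 0), (1, 0, 2, 0), (0, 1, 1, 1)}"
    by (rule vertex_type_arith)
  then show ?thesis by (simp add: A_def)
qed

end

theorem lemma9:
  fixes V :: "nat \<Rightarrow> real^3" and C :: "(real^3) set"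
    and g :: "'i \<Rightarrow> real^3 \<Rightarrow> real^3" and I :: "'i set"
  assumes "a2bc_tiling V C g I"
    and "v \<in> tiling_vertices V g I"
    and "degree V g I v = 3"
  shows "(ncorner V g I 0 v, ncorner V g I 1 v, ncorner V g I 3 v, ncorner V g I 2 v)
           \<in> {(3, 0, 0, 0), (1, 2, 0, 0), (1, 0, 2, 0), (0, 1, 1, 1)}"
proof -
  interpret a2bc_tiled V C g I by (rule a2bc_tiled.intro) (fact assms(1))
  show ?thesis using degree_3_vertex_types assms(3) by (simp add: degree_def)
qed

end
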